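(* Let $m\ge1$ and let $(t_{i,j})$ be positive reals with $t_{i+m,j-m}=t_{i,j}$, $t_{i+2,j+2}=t_{i,j}$. Define, for $i\in\mathbb{Z}$ ($m$-periodic sequences) $$a_i=t_{i+1,-i},\quad b_i=t_{i+2,-i+1},\quad c_i=t_{i,-i},\quad d_i=t_{i+1,-i+1},$$ $$x_i=\frac{c_id_{i+1}+c_{i+1}d_i}{a_ib_i},\qquad y_i=\frac{a_{i-1}b_i+a_ib_{i-1}}{c_id_i},$$ for $n\ge1$ $$u_{n,i}=\prod_{\ell=0}^{n-1}x_{i-\ell-1}^{\frac{n+1}{2}-\left|\frac{n-1}{2}-\ell\right|},\qquad v_{n,i}=\prod_{\ell=0}^{n-1}y_{i-\ell-1}^{\frac{n+1}{2}-\left|\frac{n-1}{2}-\ell\right|},$$ with $u_{0,i}=u_{-1,i}=u_{-2,i}=v_{0,i}=v_{-1,i}=v_{-2,i}=1$, and $\theta_{i,j,k}=t_{i+\lfloor k/2\rfloor,\,j+\lfloor k/2\rfloor}$. Then the solution of the $T$-system with initial data $T_{i,j,(i+j+1\bmod2)}=t_{i,j}$ is $$T_{i,j,k}=u_{k-1,\frac{i-j+k-1}{2}}\;v_{k-2,\frac{i-j+k-1}{2}}\;\theta_{i,j,k}\qquad(i,j\in\mathbb{Z},\ k\ge0,\ i+j+k\equiv1\pmod2).$$ Moreover, for $k\ge1$ and $i+j+k\equiv0\pmod2$, the ratio $L_{i,j,k}=\frac{T_{i+1,j,k}T_{i-1,j,k}}{T_{i,j,k+1}T_{i,j,k-1}}$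 is given by: if $k$ is even, with $\alpha=\frac{i-j}{2}$: $L_{i,j,k}=\frac{a_\alpha b_{\alpha-1}}{a_\alpha b_{\alpha-1}+a_{\alpha-1}b_\alpha}$ when $i+j+k\equiv0\pmod4$ and $L_{i,j,k}=\frac{a_{\alpha-1}b_{\alpha}}{a_\alpha b_{\alpha-1}+a_{\alpha-1}b_\alpha}$ when $i+j+k\equiv2\pmod4$; if $k$ is odd, with $\beta=\frac{i-j-1}{2}$: $L_{i,j,k}=\frac{c_{\beta+1}d_\beta}{c_\beta d_{\beta+1}+c_{\beta+1}d_\beta}$ when $i+j+k\equiv0\pmod4$ and $L_{i,j,k}=\frac{c_\beta d_{\beta+1}}{c_\beta d_{\beta+1}+c_{\beta+1}d_\beta}$ when $i+j+k\equiv2\pmod4$; and $R_{i,j,k}=\frac{T_{i,j+1,k}T_{i,j-1,k}}{T_{i,j,k+1}T_{i,j,k-1}}=1-L_{i,j,k}$.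
   Context: The $T$-system is $T_{i,j,k+1}T_{i,j,k-1}=T_{i+1,j,k}T_{i-1,j,k}+T_{i,j+1,k}T_{i,j-1,k}$ for $k\ge1$, $i+j+k\equiv0\pmod2$, on points $(i,j,k)\in\mathbb{Z}^2\times\mathbb{Z}_{\ge0}$ with $i+j+k\equiv1\pmod2$, with initial data $T_{i,j,(i+j+1\bmod 2)}=t_{i,j}$. The exponents in $u_{n,i},v_{n,i}$ are nonnegative integers. *)

theory Defs
  imports Complex_Main
begin

text \<open>Only the values at points with i+j+k odd are meaningful; at those points k=0 resp. k=1
carry the initial data.\<close>
fun Tsys :: "(int \<Rightarrow> int \<Rightarrow> real) \<Rightarrow> int \<Rightarrow> int \<Rightarrow> nat \<Rightarrow> real" where
  "Tsys t i j 0 = t i j"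
| "Tsys t i j (Suc 0) = t i j"
| "Tsys t i j (Suc (Suc k)) =
     (Tsys t (i+1) j (Suc k) * Tsys t (i-1) j (Suc k)
      + Tsys t i (j+1) (Suc k) * Tsys t i (j-1) (Suc k)) / Tsys t i j k"

definition sa :: "(int \<Rightarrow> int \<Rightarrow> real) \<Rightarrow> int \<Rightarrow> real" where
  "sa t i = t (i+1) (-i)"
definition sb :: "(int \<Rightarrow> int \<Rightarrow> real) \<Rightarrow> int \<Rightarrow> real" where
  "sb t i = t (i+2) (-i+1)"
definition sc :: "(int \<Rightarrow> int \<Rightarrow> real) \<Rightarrow> int \<Rightarrow> real" where
  "sc t i = t i (-i)"
definition sd :: "(int \<Rightarrow> int \<Rightarrow> real) \<Rightarrow> int \<Rightarrow> real" where
  "sd t i = t (i+1) (-i+1)"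

definition sx :: "(int \<Rightarrow> int \<Rightarrow> real) \<Rightarrow> int \<Rightarrow> real" where
  "sx t i = (sc t i * sd t (i+1) + sc t (i+1) * sd t i) / (sa t i * sb t i)"
definition sy :: "(int \<Rightarrow> int \<Rightarrow> real) \<Rightarrow> int \<Rightarrow> real" where
  "sy t i = (sa t (i-1) * sb t i + sa t i * sb t (i-1)) / (sc t i * sd t i)"

definition expo :: "int \<Rightarrow> nat \<Rightarrow> real" where
  "expo n l = (real_of_int n + 1) / 2 - \<bar>(real_of_int n - 1) / 2 - real l\<bar>"

definition su :: "(int \<Rightarrow> int \<Rightarrow> real) \<Rightarrow> int \<Rightarrow> int \<Rightarrow> real" where
  "su t n i = (if n \<le> 0 then 1 else
      (\<Prod>l\<in>{0..<nat n}. sx t (i - int l - 1) powr expo n l))"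
definition sv :: "(int \<Rightarrow> int \<Rightarrow> real) \<Rightarrow> int \<Rightarrow> int \<Rightarrow> real" where
  "sv t n i = (if n \<le> 0 then 1 else
      (\<Prod>l\<in>{0..<nat n}. sy t (i - int l - 1) powr expo n l))"

definition theta :: "(int \<Rightarrow> int \<Rightarrow> real) \<Rightarrow> int \<Rightarrow> int \<Rightarrow> nat \<Rightarrow> real" where
  "theta t i j k = t (i + int (k div 2)) (j + int (k div 2))"

end

theory Submission
  imports Defs
begin

(* The closed form is  T(i,j,k) = U(k-1, s) * theta(i,j,k)  with  s = (i-j+k-1)/2  and
   U(n,s) = u(n,s) * v(n-1,s).  It is proved by induction on k, and the induction step
   splits into two independent multiplicative identities:

   (1) the "tent" products  u, v  satisfy a discrete wave equation
         U(n,s) U(n-2,s-1) = U(n-1,s) U(n-1,s-1) * F(n,s),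
       where F(n,s) is a single x- or y-factor depending on the parity of n; this comes
       from a piecewise-linear identity for the tent exponents;
   (2) for the theta part, the four neighbours of a point are t-values on the diagonals
       i+j = const, so by the periodicity t(i+2,j+2) = t(i,j) they are values of a,b,c,d,
       and the T-system relation for theta fails exactly by the same factor F.

   The ratios L and R then only depend on the theta part.  Only positivity and the
   diagonal period t(i+2,j+2) = t(i,j) are needed. *)


subsection \<open>Tent exponents and tent products\<close>

text \<open>The exponent (n+1)/2 - |(n-1)/2 - l| is the tent function min(l+1, n-l) on 0..n-1;
  extended by 0 it becomes an integer function on all of \<int>.\<close>
definition tent :: "int \<Rightarrow> int \<Rightarrow> int" where
  "tent n l = max 0 (min (l + 1) (n - l))"

lemma expo_eq_tent: "int l < n \<Longrightarrow> expo n l = real_of_int (tent n (int l))"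
  unfolding expo_def tent_def by (auto simp: abs_if max_def min_def field_simps)

lemma tent_recurrence:
  assumes "n \<ge> 0"
  shows "tent n l + tent (n-2) (l-1)
       = tent (n-1) l + tent (n-1) (l-1) + (if odd n \<and> l = (n-1) div 2 then 1 else 0)"
proof -
  obtain b where "n = 2*b \<or> n = 2*b+1" by (metis oddE evenE)
  then show ?thesis
    using assms unfolding tent_def max_def min_def by (elim disjE; simp; presburger)
qed

definition tent_prod :: "(int \<Rightarrow> real) \<Rightarrow> int \<Rightarrow> int \<Rightarrow> real" where
  "tent_prod f n i = (if n \<le> 0 then 1 else (\<Prod>l\<in>{0..<nat n}. f (i - int l - 1) powr expo n l))"

lemma su_eq_tent_prod: "su t = tent_prod (sx t)"
  and sv_eq_tent_prod: "sv t = tent_prod (sy t)"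
  by (auto simp: fun_eq_iff su_def sv_def tent_prod_def)

lemma tent_prod_pos: "(\<And>r. f r > 0) \<Longrightarrow> tent_prod f n i > 0"
  unfolding tent_prod_def by (auto intro!: prod_pos simp: less_imp_neq[symmetric])

text \<open>For positive f the tent product can be taken over any finite window containing
  the support i-n..i-1 of the tent; this puts products of different levels on a common
  index set.\<close>
lemma tent_prod_window:
  assumes fpos: "\<And>r. f r > 0" and fin: "finite S" and sub: "{i-n..i-1} \<subseteq> S"
  shows "tent_prod f n i = (\<Prod>r\<in>S. f r powr of_int (tent n (i-1-r)))"
proof (cases "n \<le> 0")
  case True
  then have "tent n (i-1-r) = 0" for r by (simp add: tent_def)
  with True fpos show ?thesis by (simp add: tent_prod_def less_imp_neq[symmetric])
next
  case False
  have "tent_prod f n i = (\<Prod>l\<in>{0..<nat n}. f (i - int l - 1) powr expo n l)"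
    using False by (simp add: tent_prod_def)
  also have "\<dots> = (\<Prod>r\<in>{i-n..i-1}. f r powr of_int (tent n (i-1-r)))"
    by (rule prod.reindex_bij_witness[where i="\<lambda>r. nat (i-1-r)" and j="\<lambda>l. i - int l - 1"])
       (auto simp: expo_eq_tent)
  also have "\<dots> = (\<Prod>r\<in>S. f r powr of_int (tent n (i-1-r)))"
  proof (rule prod.mono_neutral_left[OF fin sub], rule ballI)
    fix r assume "r \<in> S - {i-n..i-1}"
    then have "tent n (i-1-r) = 0" by (auto simp: tent_def)
    with fpos[of r] show "f r powr of_int (tent n (i-1-r)) = 1" by simp
  qed
  finally show ?thesis .
qed

text \<open>The wave equation for tent products, obtained from tent_recurrence exponentwise.\<close>
lemma tent_prod_recurrence:
  assumes fpos: "\<And>r. f r > 0" and n: "n \<ge> 0"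
  shows "tent_prod f n s * tent_prod f (n-2) (s-1)
       = tent_prod f (n-1) s * tent_prod f (n-1) (s-1) * (if odd n then f (s - (n+1) div 2) else 1)"
proof -
  define S where "S = {s-n-2..s}"
  define apex where "apex r = (if odd n \<and> s-1-r = (n-1) div 2 then 1 else (0::int))" for r
  have window: "tent_prod f n' i = (\<Prod>r\<in>S. f r powr of_int (tent n' (i-1-r)))"
    if "{i-n'..i-1} \<subseteq> S" for n' i
    using tent_prod_window[OF fpos _ that] by (simp add: S_def)
  have apex_factor: "(\<Prod>r\<in>S. f r powr of_int (apex r)) = (if odd n then f (s - (n+1) div 2) else 1)"
  proof (cases "odd n")
    case True
    have "f r powr of_int (apex r) = (if r = s - (n+1) div 2 then f r else 1)" for r
    proof -
      have "(s-1-r = (n-1) div 2) = (r = s - (n+1) div 2)" using True by presburger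
      then show ?thesis using fpos[of r] True by (auto simp: apex_def)
    qed
    moreover have "s - (n+1) div 2 \<in> S" using True n unfolding S_def by simp presburger
    ultimately show ?thesis using True by (simp add: S_def)
  qed (simp add: apex_def fpos less_imp_neq[symmetric])
  have "tent_prod f n s * tent_prod f (n-2) (s-1)
      = (\<Prod>r\<in>S. f r powr of_int (tent n (s-1-r)) * f r powr of_int (tent (n-2) (s-1-1-r)))"
    by (subst window, force simp: S_def)+ (simp add: prod.distrib)
  also have "\<dots> = (\<Prod>r\<in>S. f r powr of_int (tent (n-1) (s-1-r))
                        * f r powr of_int (tent (n-1) (s-1-1-r)) * f r powr of_int (apex r))"
  proof (rule prod.cong[OF refl])
    fix r
    have "tent n (s-1-r) + tent (n-2) (s-1-1-r)
        = tent (n-1) (s-1-r) + tent (n-1) (s-1-1-r) + apex r"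
      using tent_recurrence[OF n, of "s-1-r"] by (simp add: apex_def algebra_simps)
    then show "f r powr of_int (tent n (s-1-r)) * f r powr of_int (tent (n-2) (s-1-1-r))
             = f r powr of_int (tent (n-1) (s-1-r)) * f r powr of_int (tent (n-1) (s-1-1-r))
               * f r powr of_int (apex r)"
      by (metis of_int_add powr_add)
  qed
  also have "\<dots> = tent_prod f (n-1) s * tent_prod f (n-1) (s-1) * (if odd n then f (s - (n+1) div 2) else 1)"
    unfolding apex_factor[symmetric] by (subst window, force simp: S_def)+ (simp add: prod.distrib)
  finally show ?thesis .
qed


subsection \<open>Diagonal periodicity and the values of theta\<close>

lemma diagonal_shift:
  fixes t :: "int \<Rightarrow> int \<Rightarrow> 'a" and n :: int
  assumes per2: "\<And>i j. t (i + 2) (j + 2) = t i j"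
  shows "t (i + 2*n) (j + 2*n) = t i j"
proof (induction n rule: int_induct[where k=0])
  case (step1 n)
  then show ?case using per2[of "i + 2*n" "j + 2*n"] by (simp add: algebra_simps)
next
  case (step2 n)
  then show ?case using per2[of "i + 2*(n-1)" "j + 2*(n-1)"] by (simp add: algebra_simps)
qed simp

lemma diagonal_periodic:
  fixes t :: "int \<Rightarrow> int \<Rightarrow> 'a"
  assumes per2: "\<And>i j. t (i + 2) (j + 2) = t i j"
    and "x - x' = y - y'" and "even (x - x')"
  shows "t x y = t x' y'"
proof -
  have "x = x' + 2 * ((x - x') div 2)" and "y = y' + 2 * ((x - x') div 2)"
    using assms(2,3) by simp_all
  then show ?thesis using diagonal_shift[where t=t, OF per2] by metis
qed

context
  fixes t :: "int \<Rightarrow> int \<Rightarrow> real" and k :: nat and i j :: int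
  assumes per2: "\<And>i j. t (i + 2) (j + 2) = t i j"
    and k1: "k \<ge> 1"
begin

lemma theta_even_0:
  assumes "even k" "(i+j+int k) mod 4 = 0"
  defines "\<alpha> \<equiv> (i-j) div 2"
  shows "theta t (i+1) j k * theta t (i-1) j k = sa t \<alpha> * sb t (\<alpha>-1)"
    "theta t i (j+1) k * theta t i (j-1) k = sa t (\<alpha>-1) * sb t \<alpha>"
    "theta t i j (k+1) * theta t i j (k-1) = sc t \<alpha> * sd t \<alpha>"
proof -
  have "theta t (i+1) j k = sa t \<alpha>" "theta t (i-1) j k = sb t (\<alpha>-1)"
    "theta t i (j+1) k = sa t (\<alpha>-1)" "theta t i (j-1) k = sb t \<alpha>"
    "theta t i j (k+1) = sc t \<alpha>" "theta t i j (k-1) = sd t \<alpha>"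
    unfolding theta_def sa_def sb_def sc_def sd_def \<alpha>_def
    by (rule diagonal_periodic[where t=t, OF per2]; use assms k1 in presburger)+
  then show "theta t (i+1) j k * theta t (i-1) j k = sa t \<alpha> * sb t (\<alpha>-1)"
    "theta t i (j+1) k * theta t i (j-1) k = sa t (\<alpha>-1) * sb t \<alpha>"
    "theta t i j (k+1) * theta t i j (k-1) = sc t \<alpha> * sd t \<alpha>" by simp_all
qed

lemma theta_even_2:
  assumes "even k" "(i+j+int k) mod 4 = 2"
  defines "\<alpha> \<equiv> (i-j) div 2"
  shows "theta t (i+1) j k * theta t (i-1) j k = sa t (\<alpha>-1) * sb t \<alpha>"
    "theta t i (j+1) k * theta t i (j-1) k = sa t \<alpha> * sb t (\<alpha>-1)"
    "theta t i j (k+1) * theta t i j (k-1) = sc t \<alpha> * sd t \<alpha>"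
proof -
  have "theta t (i+1) j k = sb t \<alpha>" "theta t (i-1) j k = sa t (\<alpha>-1)"
    "theta t i (j+1) k = sb t (\<alpha>-1)" "theta t i (j-1) k = sa t \<alpha>"
    "theta t i j (k+1) = sd t \<alpha>" "theta t i j (k-1) = sc t \<alpha>"
    unfolding theta_def sa_def sb_def sc_def sd_def \<alpha>_def
    by (rule diagonal_periodic[where t=t, OF per2]; use assms k1 in presburger)+
  then show "theta t (i+1) j k * theta t (i-1) j k = sa t (\<alpha>-1) * sb t \<alpha>"
    "theta t i (j+1) k * theta t i (j-1) k = sa t \<alpha> * sb t (\<alpha>-1)"
    "theta t i j (k+1) * theta t i j (k-1) = sc t \<alpha> * sd t \<alpha>" by (simp_all add: mult.commute)
qed

lemma theta_odd_0:
  assumes "odd k" "(i+j+int k) mod 4 = 0"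
  defines "\<beta> \<equiv> (i-j-1) div 2"
  shows "theta t (i+1) j k * theta t (i-1) j k = sc t (\<beta>+1) * sd t \<beta>"
    "theta t i (j+1) k * theta t i (j-1) k = sc t \<beta> * sd t (\<beta>+1)"
    "theta t i j (k+1) * theta t i j (k-1) = sa t \<beta> * sb t \<beta>"
proof -
  have "theta t (i+1) j k = sc t (\<beta>+1)" "theta t (i-1) j k = sd t \<beta>"
    "theta t i (j+1) k = sc t \<beta>" "theta t i (j-1) k = sd t (\<beta>+1)"
    "theta t i j (k+1) = sa t \<beta>" "theta t i j (k-1) = sb t \<beta>"
    unfolding theta_def sa_def sb_def sc_def sd_def \<beta>_def
    by (rule diagonal_periodic[where t=t, OF per2]; use assms k1 in presburger)+
  then show "theta t (i+1) j k * theta t (i-1) j k = sc t (\<beta>+1) * sd t \<beta>"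
    "theta t i (j+1) k * theta t i (j-1) k = sc t \<beta> * sd t (\<beta>+1)"
    "theta t i j (k+1) * theta t i j (k-1) = sa t \<beta> * sb t \<beta>" by simp_all
qed

lemma theta_odd_2:
  assumes "odd k" "(i+j+int k) mod 4 = 2"
  defines "\<beta> \<equiv> (i-j-1) div 2"
  shows "theta t (i+1) j k * theta t (i-1) j k = sc t \<beta> * sd t (\<beta>+1)"
    "theta t i (j+1) k * theta t i (j-1) k = sc t (\<beta>+1) * sd t \<beta>"
    "theta t i j (k+1) * theta t i j (k-1) = sa t \<beta> * sb t \<beta>"
proof -
  have "theta t (i+1) j k = sd t (\<beta>+1)" "theta t (i-1) j k = sc t \<beta>"
    "theta t i (j+1) k = sd t \<beta>" "theta t i (j-1) k = sc t (\<beta>+1)"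
    "theta t i j (k+1) = sb t \<beta>" "theta t i j (k-1) = sa t \<beta>"
    unfolding theta_def sa_def sb_def sc_def sd_def \<beta>_def
    by (rule diagonal_periodic[where t=t, OF per2]; use assms k1 in presburger)+
  then show "theta t (i+1) j k * theta t (i-1) j k = sc t \<beta> * sd t (\<beta>+1)"
    "theta t i (j+1) k * theta t i (j-1) k = sc t (\<beta>+1) * sd t \<beta>"
    "theta t i j (k+1) * theta t i j (k-1) = sa t \<beta> * sb t \<beta>" by (simp_all add: mult.commute)
qed

end


text \<open>The correction factor F(n,s) by which both the U-part and the theta-part fail to
  satisfy the T-system relation: an x-value for odd n, a y-value for even n.\<close>
definition step_factor :: "(int \<Rightarrow> int \<Rightarrow> real) \<Rightarrow> int \<Rightarrow> int \<Rightarrow> real" where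
  "step_factor t n s = (if odd n then sx t (s - (n+1) div 2) else sy t (s - n div 2))"

definition uv :: "(int \<Rightarrow> int \<Rightarrow> real) \<Rightarrow> int \<Rightarrow> int \<Rightarrow> real" where
  "uv t n s = su t n s * sv t (n-1) s"

definition tsol :: "(int \<Rightarrow> int \<Rightarrow> real) \<Rightarrow> int \<Rightarrow> int \<Rightarrow> nat \<Rightarrow> real" where
  "tsol t i j k = uv t (int k - 1) ((i - j + int k - 1) div 2) * theta t i j k"

context
  fixes t :: "int \<Rightarrow> int \<Rightarrow> real"
  assumes pos: "\<And>i j. t i j > 0"
begin

text \<open>For positive initial data all x, y, U and T values are positive, so that the
  divisions in the T-system and in the ratios L, R are harmless.\<close>
lemma sx_pos: "sx t r > 0" and sy_pos: "sy t r > 0"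
  unfolding sx_def sy_def sa_def sb_def sc_def sd_def by (intro divide_pos_pos add_pos_pos mult_pos_pos pos)+

lemma uv_pos: "uv t n s > 0"
  unfolding uv_def su_eq_tent_prod sv_eq_tent_prod
  using tent_prod_pos[OF sx_pos] tent_prod_pos[OF sy_pos] by simp

lemma uv_recurrence:
  assumes n: "n \<ge> 1"
  shows "uv t n s * uv t (n-2) (s-1) = uv t (n-1) s * uv t (n-1) (s-1) * step_factor t n s"
proof -
  have u: "su t n s * su t (n-2) (s-1)
         = su t (n-1) s * su t (n-1) (s-1) * (if odd n then sx t (s - (n+1) div 2) else 1)"
    unfolding su_eq_tent_prod by (rule tent_prod_recurrence[OF sx_pos]) (use n in simp)
  have v: "sv t (n-1) s * sv t (n-1-2) (s-1)
         = sv t (n-1-1) s * sv t (n-1-1) (s-1) * (if odd (n-1) then sy t (s - (n-1+1) div 2) else 1)"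
    unfolding sv_eq_tent_prod by (rule tent_prod_recurrence[OF sy_pos]) (use n in simp)
  show ?thesis
    using u v by (simp add: uv_def step_factor_def algebra_simps)
qed

text \<open>The theta part satisfies the T-system relation up to the same factor F; this is
  where x and y are defined: e.g. for even k, y_\<alpha> c_\<alpha> d_\<alpha> = a_{\<alpha>-1} b_\<alpha> + a_\<alpha> b_{\<alpha>-1}.\<close>
lemma theta_recurrence:
  assumes per2: "\<And>i j. t (i + 2) (j + 2) = t i j"
    and k1: "k \<ge> 1" and ev: "even (i + j + int k)"
  shows "theta t (i+1) j k * theta t (i-1) j k + theta t i (j+1) k * theta t i (j-1) k
       = step_factor t (int k) ((i - j + int k) div 2) * (theta t i j (k+1) * theta t i j (k-1))"
proof -
  have sc_sd: "sc t r * sd t r \<noteq> 0" and sa_sb: "sa t r * sb t r \<noteq> 0" for r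
    unfolding sa_def sb_def sc_def sd_def using pos by (simp_all add: less_imp_neq[symmetric])
  have mod4: "(i+j+int k) mod 4 = 0 \<or> (i+j+int k) mod 4 = 2" using ev by presburger
  show ?thesis
  proof (cases "even k")
    case True
    define \<alpha> where "\<alpha> = (i-j) div 2"
    have F: "step_factor t (int k) ((i - j + int k) div 2) = sy t \<alpha>"
      unfolding step_factor_def \<alpha>_def using True ev by (simp; presburger)
    have y_rel: "sy t \<alpha> * (sc t \<alpha> * sd t \<alpha>) = sa t (\<alpha>-1) * sb t \<alpha> + sa t \<alpha> * sb t (\<alpha>-1)"
      unfolding sy_def using sc_sd[of \<alpha>] by simp
    from mod4 show ?thesis
    proof
      assume "(i+j+int k) mod 4 = 0"
      from theta_even_0[where t=t and i=i and j=j, OF per2 k1 True this] y_rel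
      show ?thesis unfolding F \<alpha>_def by (simp add: add.commute)
    next
      assume "(i+j+int k) mod 4 = 2"
      from theta_even_2[where t=t and i=i and j=j, OF per2 k1 True this] y_rel
      show ?thesis unfolding F \<alpha>_def by simp
    qed
  next
    case False
    define \<beta> where "\<beta> = (i-j-1) div 2"
    have "odd (int k)" and "(i - j + int k) div 2 - (int k + 1) div 2 = \<beta>"
      unfolding \<beta>_def using False ev by presburger+
    then have F: "step_factor t (int k) ((i - j + int k) div 2) = sx t \<beta>"
      unfolding step_factor_def by simp
    have x_rel: "sx t \<beta> * (sa t \<beta> * sb t \<beta>) = sc t \<beta> * sd t (\<beta>+1) + sc t (\<beta>+1) * sd t \<beta>"
      unfolding sx_def using sa_sb[of \<beta>] by simp
    from mod4 show ?thesis
    proof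
      assume "(i+j+int k) mod 4 = 0"
      from theta_odd_0[where t=t and i=i and j=j, OF per2 k1 False this] x_rel
      show ?thesis unfolding F \<beta>_def by (simp add: add.commute)
    next
      assume "(i+j+int k) mod 4 = 2"
      from theta_odd_2[where t=t and i=i and j=j, OF per2 k1 False this] x_rel
      show ?thesis unfolding F \<beta>_def by simp
    qed
  qed
qed


lemma Tsys_pos: "Tsys t i j k > 0"
proof -
  have "(\<forall>i j. t i j > 0) \<longrightarrow> Tsys t i j k > 0"
    by (induction t i j k rule: Tsys.induct) (auto intro!: divide_pos_pos add_pos_pos mult_pos_pos)
  with pos show ?thesis by blast
qed

lemma Tsys_relation:
  assumes "k \<ge> 1"
  shows "Tsys t i j (k+1) * Tsys t i j (k-1)
       = Tsys t (i+1) j k * Tsys t (i-1) j k + Tsys t i (j+1) k * Tsys t i (j-1) k"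
proof -
  obtain k' where k: "k = Suc k'" using assms by (cases k) auto
  have "Tsys t i j k' > 0" by (rule Tsys_pos)
  then show ?thesis unfolding k by simp
qed

lemma neighbour_products:
  assumes ev: "even (i + j + int k)"
    and layer: "\<And>i j. odd (i + j + int k) \<Longrightarrow> Tsys t i j k = tsol t i j k"
  defines "Q \<equiv> uv t (int k - 1) ((i - j + int k) div 2) * uv t (int k - 1) ((i - j + int k) div 2 - 1)"
  shows "Tsys t (i+1) j k * Tsys t (i-1) j k = Q * (theta t (i+1) j k * theta t (i-1) j k)"
    "Tsys t i (j+1) k * Tsys t i (j-1) k = Q * (theta t i (j+1) k * theta t i (j-1) k)"
proof -
  have idx: "(i + 1 - j + int k - 1) div 2 = (i - j + int k) div 2"
    "(i - 1 - j + int k - 1) div 2 = (i - j + int k) div 2 - 1"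
    "(i - (j + 1) + int k - 1) div 2 = (i - j + int k) div 2 - 1"
    "(i - (j - 1) + int k - 1) div 2 = (i - j + int k) div 2"
    using ev by presburger+
  have odd: "odd (i + 1 + j + int k)" "odd (i - 1 + j + int k)"
    "odd (i + (j+1) + int k)" "odd (i + (j - 1) + int k)"
    using ev by presburger+
  show "Tsys t (i+1) j k * Tsys t (i-1) j k = Q * (theta t (i+1) j k * theta t (i-1) j k)"
    unfolding layer[OF odd(1)] layer[OF odd(2)] tsol_def idx Q_def by (simp add: algebra_simps)
  show "Tsys t i (j+1) k * Tsys t i (j-1) k = Q * (theta t i (j+1) k * theta t i (j-1) k)"
    unfolding layer[OF odd(3)] layer[OF odd(4)] tsol_def idx Q_def by (simp add: algebra_simps)
qed

lemma closed_form_step: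
  assumes per2: "\<And>i j. t (i + 2) (j + 2) = t i j"
    and k1: "k \<ge> 1" and ev: "even (i + j + int k)"
    and layer: "\<And>i j. odd (i + j + int k) \<Longrightarrow> Tsys t i j k = tsol t i j k"
    and below: "Tsys t i j (k-1) = tsol t i j (k-1)"
  shows "Tsys t i j (k+1) = tsol t i j (k+1)"
proof -
  define \<sigma> where "\<sigma> = (i - j + int k) div 2"
  define Q where "Q = uv t (int k - 1) \<sigma> * uv t (int k - 1) (\<sigma>-1)"
  have below': "tsol t i j (k-1) = uv t (int k - 2) (\<sigma>-1) * theta t i j (k-1)"
  proof -
    have "int (k-1) - 1 = int k - 2" "(i - j + int (k-1) - 1) div 2 = \<sigma> - 1"
      using k1 ev unfolding \<sigma>_def by (simp, presburger)
    then show ?thesis unfolding tsol_def by simp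
  qed
  have above: "tsol t i j (k+1) = uv t (int k) \<sigma> * theta t i j (k+1)"
  proof -
    have "int (k+1) - 1 = int k" "(i - j + int (k+1) - 1) div 2 = \<sigma>"
      unfolding \<sigma>_def by simp_all
    then show ?thesis unfolding tsol_def by simp
  qed
  have "Tsys t i j (k+1) * tsol t i j (k-1)
      = Q * (theta t (i+1) j k * theta t (i-1) j k + theta t i (j+1) k * theta t i (j-1) k)"
    using Tsys_relation[OF k1, of i j] neighbour_products[OF ev layer]
    unfolding below[symmetric] Q_def \<sigma>_def by (simp add: algebra_simps)
  also have "\<dots> = Q * step_factor t (int k) \<sigma> * (theta t i j (k+1) * theta t i j (k-1))"
    unfolding theta_recurrence[OF per2 k1 ev] \<sigma>_def by simp
  also have "\<dots> = tsol t i j (k+1) * tsol t i j (k-1)"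
    using uv_recurrence[of "int k" \<sigma>] k1 unfolding Q_def above below' by (simp add: algebra_simps)
  finally have "Tsys t i j (k+1) * tsol t i j (k-1) = tsol t i j (k+1) * tsol t i j (k-1)" .
  moreover have "tsol t i j (k-1) > 0"
    unfolding below' theta_def using uv_pos pos by simp
  ultimately show ?thesis by simp
qed

lemma closed_form:
  assumes per2: "\<And>i j. t (i + 2) (j + 2) = t i j"
  shows "odd (i + j + int k) \<Longrightarrow> Tsys t i j k = tsol t i j k"
proof (induction k arbitrary: i j rule: less_induct)
  case (less k)
  show ?case
  proof (cases "k \<le> 1")
    case True
    then show ?thesis by (auto simp: le_Suc_eq tsol_def uv_def su_def sv_def theta_def)
  next
    case False
    define k' where "k' = k - 1"
    have k: "k = k' + 1" and k1: "k' \<ge> 1" using False by (simp_all add: k'_def)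
    have ev: "even (i + j + int k')" using less.prems k by simp
    show ?thesis
      unfolding k by (rule closed_form_step[OF per2 k1 ev]) (use less.IH k ev k1 in auto)
  qed
qed

text \<open>The ratios L and R only see the theta part: the common U-factor cancels, and
  L + R = 1 is the T-system relation itself.\<close>
lemma neighbour_ratios:
  assumes per2: "\<And>i j. t (i + 2) (j + 2) = t i j"
    and k1: "k \<ge> 1" and ev: "even (i + j + int k)"
  defines "P1 \<equiv> theta t (i+1) j k * theta t (i-1) j k"
    and "P2 \<equiv> theta t i (j+1) k * theta t i (j-1) k"
  shows "Tsys t (i+1) j k * Tsys t (i-1) j k / (Tsys t i j (k+1) * Tsys t i j (k-1)) = P1 / (P1 + P2)"
    and "Tsys t i (j+1) k * Tsys t i (j-1) k / (Tsys t i j (k+1) * Tsys t i j (k-1)) = 1 - P1 / (P1 + P2)"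
proof -
  define Q where "Q = uv t (int k - 1) ((i - j + int k) div 2) * uv t (int k - 1) ((i - j + int k) div 2 - 1)"
  have "Q > 0" unfolding Q_def using uv_pos by simp
  have nb: "Tsys t (i+1) j k * Tsys t (i-1) j k = Q * P1" "Tsys t i (j+1) k * Tsys t i (j-1) k = Q * P2"
    using neighbour_products[OF ev closed_form[OF per2]] unfolding Q_def P1_def P2_def by simp_all
  then have sum: "Tsys t i j (k+1) * Tsys t i j (k-1) = Q * (P1 + P2)"
    unfolding Tsys_relation[OF k1] by (simp add: distrib_left)
  show "Tsys t (i+1) j k * Tsys t (i-1) j k / (Tsys t i j (k+1) * Tsys t i j (k-1)) = P1 / (P1 + P2)"
    unfolding sum nb using \<open>Q > 0\<close> by simp
  have "P1 > 0" "P2 > 0" unfolding P1_def P2_def theta_def using pos by simp_all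
  then have "P2 / (P1 + P2) = 1 - P1 / (P1 + P2)" by (simp add: field_simps)
  with \<open>Q > 0\<close> show "Tsys t i (j+1) k * Tsys t i (j-1) k / (Tsys t i j (k+1) * Tsys t i j (k-1)) = 1 - P1 / (P1 + P2)"
    unfolding sum nb by simp
qed

end


theorem mainTheorem6:
  fixes t :: "int \<Rightarrow> int \<Rightarrow> real" and m :: nat
  assumes "m \<ge> 1"
    and pos: "\<And>i j. t i j > 0"
    and per1: "\<And>i j. t (i + int m) (j - int m) = t i j"
    and per2: "\<And>i j. t (i + 2) (j + 2) = t i j"
  shows "(\<forall>i j k. odd (i + j + int k) \<longrightarrow>
            Tsys t i j k = su t (int k - 1) ((i - j + int k - 1) div 2)
                         * sv t (int k - 2) ((i - j + int k - 1) div 2)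
                         * theta t i j k)
       \<and> (\<forall>i j k. k \<ge> 1 \<longrightarrow> even (i + j + int k) \<longrightarrow>
            (let L = Tsys t (i+1) j k * Tsys t (i-1) j k / (Tsys t i j (k+1) * Tsys t i j (k-1));
                 R = Tsys t i (j+1) k * Tsys t i (j-1) k / (Tsys t i j (k+1) * Tsys t i j (k-1));
                 \<alpha> = (i - j) div 2; \<beta> = (i - j - 1) div 2;
                 A = sa t \<alpha> * sb t (\<alpha>-1) + sa t (\<alpha>-1) * sb t \<alpha>;
                 C = sc t \<beta> * sd t (\<beta>+1) + sc t (\<beta>+1) * sd t \<beta>
             in (even k \<and> (i + j + int k) mod 4 = 0 \<longrightarrow> L = sa t \<alpha> * sb t (\<alpha>-1) / A)
              \<and> (even k \<and> (i + j + int k) mod 4 = 2 \<longrightarrow> L = sa t (\<alpha>-1) * sb t \<alpha> / A)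
              \<and> (odd k \<and> (i + j + int k) mod 4 = 0 \<longrightarrow> L = sc t (\<beta>+1) * sd t \<beta> / C)
              \<and> (odd k \<and> (i + j + int k) mod 4 = 2 \<longrightarrow> L = sc t \<beta> * sd t (\<beta>+1) / C)
              \<and> R = 1 - L))"
proof (intro conjI allI impI, goal_cases)
  case (1 i j k)
  then show ?case using closed_form[where t=t, OF pos per2] by (simp add: tsol_def uv_def)
next
  case (2 i j k)
  then have k1: "k \<ge> 1" and ev: "even (i + j + int k)" by simp_all
  note theta_values = theta_even_0[where t=t and i=i and j=j, OF per2 k1]
    theta_even_2[where t=t and i=i and j=j, OF per2 k1] theta_odd_0[where t=t and i=i and j=j, OF per2 k1]
    theta_odd_2[where t=t and i=i and j=j, OF per2 k1]
  show ?case
    unfolding Let_def neighbour_ratios[where t=t, OF pos per2 k1 ev]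
    by (intro conjI impI refl; elim conjE; simp only: theta_values not_False_eq_True; simp add: add.commute)
qed

end
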